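(* Let $X,Y$ be a section-pair with $m\ge 2$ chords. Then there is a parallel collection of subsection pairs $X_1,Y_1;\dots;X_t,Y_t$ such that $\sum_{i=1}^t e(X_i,Y_i)\ge m/24$ and one of the following holds: (1) for every $i$, there is a vertex of $X_i\cup Y_i$ incident to at least $\frac{e(X_i,Y_i)}{6\log m}$ chords of $E(X_i,Y_i)$; (2) for every $i$, there is a chord in $E(X_i,Y_i)$ which interlaces at least $\frac{e(X_i,Y_i)}{6\log m}$ of the chords in $E(X_i,Y_i)$.
   Context: Logarithms are base 2. A section-pair in a graph $G$ is a pair $X,Y$ of vertex-disjoint paths; the two endpoints of $X$ are designated its top $x^{t}$ and bottom $x^{b}$, and those of $Y$ its top $y^t$ and bottom $y^b$. For distinct $x_1,x_2\in X$, $x_1$ is above $x_2$ if $x_1$ is closer to $x^t$ along $X$ than $x_2$, otherwise below; similarly in $Y$. For vertex sets $A,B\subseteq X$ (or $\subseteq Y$), $A$ is above (resp. below) $B$ if every vertex of $A$ is above (resp. below) every vertex of $B$. A chord is an edge of $G$ with one endpoint in $X$ and one in $Y$. Two chords $(x_1,y_1),(x_2,y_2)$ ($x_i\in X,y_i\in Y$) with no common vertex are parallel if for some $i\in\{1,2\}$, $x_i$ is above $x_{3-i}$ and $y_i$ is above $y_{3-i}$; otherwise they are interlacing (a chord interlaces another). A subsection pair of $X,Y$ is a section-pair $X',Y'$ where $X'$ is a subpath of $X$ and $Y'$ a subpath of $Y$ (tops being the endpoints closer to $x^t$, resp. $y^t$); $E(X',Y')$ is the set of chords with one endpoint in $X'$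 and one in $Y'$, and $e(X',Y')=|E(X',Y')|$. A collection $X_1,Y_1;\dots;X_t,Y_t$ of subsection pairs, with the $X_i$ pairwise vertex-disjoint and the $Y_i$ pairwise vertex-disjoint, labeled so that $X_i$ is below $X_j$ for all $i<j$, is parallel if also $Y_i$ is below $Y_j$ for all $i<j$. *)

theory Defs
  imports Complex_Main
begin

text \<open>A path is a nonempty list of distinct vertices, consecutive ones adjacent;
  its top is the first element (hd) and its bottom is the last element.\<close>

definition simple_graph :: "('a \<Rightarrow> 'a \<Rightarrow> bool) \<Rightarrow> bool" where
  "simple_graph E \<longleftrightarrow> (\<forall>u v. E u v \<longrightarrow> E v u) \<and> (\<forall>v. \<not> E v v)"

definition is_path :: "('a \<Rightarrow> 'a \<Rightarrow> bool) \<Rightarrow> 'a list \<Rightarrow> bool" where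
  "is_path E P \<longleftrightarrow> P \<noteq> [] \<and> distinct P \<and> (\<forall>i. Suc i < length P \<longrightarrow> E (P ! i) (P ! Suc i))"

definition section_pair :: "('a \<Rightarrow> 'a \<Rightarrow> bool) \<Rightarrow> 'a list \<Rightarrow> 'a list \<Rightarrow> bool" where
  "section_pair E X Y \<longleftrightarrow> is_path E X \<and> is_path E Y \<and> set X \<inter> set Y = {}"

definition chords :: "('a \<Rightarrow> 'a \<Rightarrow> bool) \<Rightarrow> 'a list \<Rightarrow> 'a list \<Rightarrow> ('a \<times> 'a) set" where
  "chords E X Y = {(x, y). x \<in> set X \<and> y \<in> set Y \<and> E x y}"

definition above :: "'a list \<Rightarrow> 'a \<Rightarrow> 'a \<Rightarrow> bool" where
  "above P a b \<longleftrightarrow> (\<exists>i j. i < j \<and> j < length P \<and> P ! i = a \<and> P ! j = b)"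

definition set_below :: "'a list \<Rightarrow> 'a set \<Rightarrow> 'a set \<Rightarrow> bool" where
  "set_below P A B \<longleftrightarrow> (\<forall>a\<in>A. \<forall>b\<in>B. above P b a)"

definition parallel_chords :: "'a list \<Rightarrow> 'a list \<Rightarrow> 'a \<times> 'a \<Rightarrow> 'a \<times> 'a \<Rightarrow> bool" where
  "parallel_chords X Y c d \<longleftrightarrow>
     fst c \<noteq> fst d \<and> snd c \<noteq> snd d \<and>
     ((above X (fst c) (fst d) \<and> above Y (snd c) (snd d)) \<or>
      (above X (fst d) (fst c) \<and> above Y (snd d) (snd c)))"

definition interlacing :: "'a list \<Rightarrow> 'a list \<Rightarrow> 'a \<times> 'a \<Rightarrow> 'a \<times> 'a \<Rightarrow> bool" where
  "interlacing X Y c d \<longleftrightarrow>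
     fst c \<noteq> fst d \<and> snd c \<noteq> snd d \<and> \<not> parallel_chords X Y c d"

definition subpath :: "'a list \<Rightarrow> 'a list \<Rightarrow> bool" where
  "subpath P' P \<longleftrightarrow> P' \<noteq> [] \<and> (\<exists>as bs. P = as @ P' @ bs)"

definition parallel_collection :: "'a list \<Rightarrow> 'a list \<Rightarrow> ('a list \<times> 'a list) list \<Rightarrow> bool" where
  "parallel_collection X Y C \<longleftrightarrow>
     (\<forall>i < length C. subpath (fst (C ! i)) X \<and> subpath (snd (C ! i)) Y) \<and>
     (\<forall>i j. i < j \<and> j < length C \<longrightarrow>
        set (fst (C ! i)) \<inter> set (fst (C ! j)) = {} \<and>
        set (snd (C ! i)) \<inter> set (snd (C ! j)) = {} \<and>
        set_below X (set (fst (C ! i))) (set (fst (C ! j))) \<and>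
        set_below Y (set (snd (C ! i))) (set (snd (C ! j))))"

end

theory Submission
  imports Defs
begin

(* Record the chord (X ! i, Y ! j) as the grid point (i, j). Chords sharing a vertex then lie in a
   common row or column, and interlacing chords become crossing points. A rectangle holding e points
   either has a heavy row, column or crossing point, with threshold e / L for L = 6 log m, or it is
   split at its median row and median column: the median row and column are light, and so are the
   two off-diagonal quadrants, since a point of one crosses every point of the other. Hence the two
   diagonal quadrants keep all but 4e / L of the points, hold at most e / 2 points each, and are
   parallel to each other. Recursing on them, the depth is at most log e, so the heavy rectangles
   finally collected carry at least e (1 - 5 log e / L) >= m / 6 points; those of one of the two
   kinds carry half of that. *)

section \<open>Point sets in a grid\<close>

fun rect_points :: "(nat \<times> nat) set \<Rightarrow> nat \<times> nat \<times> nat \<times> nat \<Rightarrow> (nat \<times> nat) set" where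
  "rect_points P (a, b, c, d) = {p \<in> P. a \<le> fst p \<and> fst p < b \<and> c \<le> snd p \<and> snd p < d}"

definition crossing :: "nat \<times> nat \<Rightarrow> nat \<times> nat \<Rightarrow> bool" where
  "crossing p q \<longleftrightarrow>
     (fst p < fst q \<and> snd q < snd p) \<or> (fst q < fst p \<and> snd p < snd q)"

definition heavy_line :: "(nat \<times> nat) set \<Rightarrow> real \<Rightarrow> nat \<times> nat \<times> nat \<times> nat \<Rightarrow> bool" where
  "heavy_line P L R \<longleftrightarrow> (\<exists>p \<in> rect_points P R.
     real (card {q \<in> rect_points P R. fst q = fst p}) \<ge> real (card (rect_points P R)) / L \<or>
     real (card {q \<in> rect_points P R. snd q = snd p}) \<ge> real (card (rect_points P R)) / L)"

definition heavy_crossing :: "(nat \<times> nat) set \<Rightarrow> real \<Rightarrow> nat \<times> nat \<times> nat \<times> nat \<Rightarrow> bool" where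
  "heavy_crossing P L R \<longleftrightarrow> (\<exists>p \<in> rect_points P R.
     real (card {q \<in> rect_points P R. crossing p q}) \<ge> real (card (rect_points P R)) / L)"

fun subrect :: "nat \<times> nat \<times> nat \<times> nat \<Rightarrow> nat \<times> nat \<times> nat \<times> nat \<Rightarrow> bool" where
  "subrect (a', b', c', d') (a, b, c, d) \<longleftrightarrow>
     a \<le> a' \<and> a' < b' \<and> b' \<le> b \<and> c \<le> c' \<and> c' < d' \<and> d' \<le> d"

text \<open>Larger indices lie lower on the paths, so a sorted chain lists its rectangles from the bottom
  up, matching the labelling of a parallel collection.\<close>

fun rect_after :: "nat \<times> nat \<times> nat \<times> nat \<Rightarrow> nat \<times> nat \<times> nat \<times> nat \<Rightarrow> bool" where
  "rect_after (a, b, c, d) (a', b', c', d') \<longleftrightarrow> b' \<le> a \<and> d' \<le> c"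

definition good_chain ::
    "(nat \<times> nat) set \<Rightarrow> real \<Rightarrow> nat \<times> nat \<times> nat \<times> nat \<Rightarrow> (nat \<times> nat \<times> nat \<times> nat) list \<Rightarrow> bool" where
  "good_chain P L R C \<longleftrightarrow>
     (\<forall>x \<in> set C. subrect x R \<and> (heavy_line P L x \<or> heavy_crossing P L x)) \<and>
     sorted_wrt rect_after C"

lemma exists_median:
  fixes f :: "'a \<Rightarrow> nat"
  assumes "finite S"
  obtains r where "2 * card {x \<in> S. f x < r} \<le> card S" and "2 * card {x \<in> S. r < f x} \<le> card S"
proof -
  obtain N where N: "\<forall>x \<in> S. f x \<le> N"
    using assms by (meson finite_imageI finite_nat_set_iff_bounded_le imageI)
  define r where "r = (LEAST t. card S \<le> 2 * card {x \<in> S. f x \<le> t})"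
  have "{x \<in> S. f x \<le> N} = S" using N by auto
  then have r: "card S \<le> 2 * card {x \<in> S. f x \<le> r}"
    unfolding r_def by (intro LeastI[where P = "\<lambda>t. card S \<le> 2 * card {x \<in> S. f x \<le> t}" and k = N]) simp
  have "2 * card {x \<in> S. f x < r} \<le> card S"
  proof (cases r)
    case (Suc r')
    have "\<not> card S \<le> 2 * card {x \<in> S. f x \<le> r'}"
      using not_less_Least[of r' "\<lambda>t. card S \<le> 2 * card {x \<in> S. f x \<le> t}"] Suc r_def by simp
    moreover have "{x \<in> S. f x < r} = {x \<in> S. f x \<le> r'}" using Suc by auto
    ultimately show ?thesis by simp
  qed simp
  have "card {x \<in> S. r < f x} = card (S - {x \<in> S. f x \<le> r})"
    by (rule arg_cong[where f = card]) auto
  also have "\<dots> = card S - card {x \<in> S. f x \<le> r}"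
    using assms by (intro card_Diff_subset) auto
  finally have "2 * card {x \<in> S. r < f x} \<le> card S" using r by simp
  with that \<open>2 * card {x \<in> S. f x < r} \<le> card S\<close> show thesis by blast
qed

lemma card_disjoint_add_le:
  assumes "finite C" "A \<subseteq> C" "B \<subseteq> C" "A \<inter> B = {}"
  shows "card A + card B \<le> card C"
proof -
  have "card A + card B = card (A \<union> B)"
    using assms by (intro card_Un_disjoint[symmetric]) (auto intro: finite_subset)
  also have "\<dots> \<le> card C" using assms by (intro card_mono) auto
  finally show ?thesis .
qed

lemma card_le_quadrants:
  fixes S :: "(nat \<times> nat) set"
  assumes "finite S"
  shows "card S \<le> card {p \<in> S. fst p < r \<and> snd p < s} + card {p \<in> S. r < fst p \<and> s < snd p}
    + card {p \<in> S. fst p < r \<and> s < snd p} + card {p \<in> S. r < fst p \<and> snd p < s}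
    + card {p \<in> S. fst p = r} + card {p \<in> S. snd p = s}"
    (is "_ \<le> card ?A + card ?B + card ?D + card ?F + card ?R + card ?C")
proof -
  have "S = ?A \<union> ?B \<union> ?D \<union> ?F \<union> ?R \<union> ?C" by (auto simp: not_less_iff_gr_or_eq)
  then have "card S = card (?A \<union> ?B \<union> ?D \<union> ?F \<union> ?R \<union> ?C)" by simp
  also have "\<dots> \<le> card ?A + card ?B + card ?D + card ?F + card ?R + card ?C"
    by (meson add_mono card_Un_le le_trans order_refl)
  finally show ?thesis .
qed

lemma rect_points_subset: "rect_points P R \<subseteq> P"
  by (cases R) auto

lemma not_heavy_line_card_less:
  assumes "finite P" "L > 0" "rect_points P R \<noteq> {}" "\<not> heavy_line P L R"
  shows "real (card {p \<in> rect_points P R. fst p = i}) < real (card (rect_points P R)) / L"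
    and "real (card {p \<in> rect_points P R. snd p = j}) < real (card (rect_points P R)) / L"
proof -
  have pos: "0 < real (card (rect_points P R)) / L"
    using assms(1-3) finite_subset[OF rect_points_subset] by (simp add: card_gt_0_iff)
  show "real (card {p \<in> rect_points P R. fst p = i}) < real (card (rect_points P R)) / L"
  proof (cases "\<exists>p \<in> rect_points P R. fst p = i")
    case True
    then show ?thesis using assms(4) unfolding heavy_line_def by (auto simp: not_le)
  next
    case False
    then have empty: "{p \<in> rect_points P R. fst p = i} = {}" by auto
    show ?thesis unfolding empty using pos by simp
  qed
  show "real (card {p \<in> rect_points P R. snd p = j}) < real (card (rect_points P R)) / L"
  proof (cases "\<exists>p \<in> rect_points P R. snd p = j")
    case True
    then show ?thesis using assms(4) unfolding heavy_line_def by (auto simp: not_le)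
  next
    case False
    then have empty: "{p \<in> rect_points P R. snd p = j} = {}" by auto
    show ?thesis unfolding empty using pos by simp
  qed
qed

lemma not_heavy_crossing_card_less:
  assumes "finite P" "\<not> heavy_crossing P L R" "p \<in> rect_points P R"
    and "F \<subseteq> rect_points P R" "\<forall>q \<in> F. crossing p q"
  shows "real (card F) < real (card (rect_points P R)) / L"
proof -
  have "card F \<le> card {q \<in> rect_points P R. crossing p q}"
    using assms finite_subset[OF rect_points_subset] by (intro card_mono) auto
  moreover have "real (card {q \<in> rect_points P R. crossing p q}) < real (card (rect_points P R)) / L"
    using assms(2,3) unfolding heavy_crossing_def by (auto simp: not_le)
  ultimately show ?thesis by linarith
qed

lemma exists_median_between:
  fixes f :: "'a \<Rightarrow> nat"
  assumes "finite S" and "S \<noteq> {}" and range: "\<forall>x \<in> S. a \<le> f x \<and> f x < b"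
  obtains r where "a \<le> r" and "r < b"
    and "2 * card {x \<in> S. f x < r} \<le> card S" and "2 * card {x \<in> S. r < f x} \<le> card S"
proof -
  obtain r where below: "2 * card {x \<in> S. f x < r} \<le> card S" and above: "2 * card {x \<in> S. r < f x} \<le> card S"
    using exists_median[OF assms(1)] by blast
  have not_all: "\<not> (\<forall>x \<in> S. Q x)" if "2 * card {x \<in> S. Q x} \<le> card S" for Q
  proof
    assume "\<forall>x \<in> S. Q x"
    then have "{x \<in> S. Q x} = S" by blast
    with that assms(1,2) show False by simp
  qed
  have "a \<le> r" using not_all[OF above] range by force
  moreover have "r < b" using not_all[OF below] range by force
  ultimately show thesis using that below above by blast
qed

lemma diagonal_quadrants_bound:
  fixes S :: "(nat \<times> nat) set" and t :: real
  assumes "finite S"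
    and "2 * card {p \<in> S. fst p < r} \<le> card S" and "2 * card {p \<in> S. r < fst p} \<le> card S"
    and "2 * card {p \<in> S. snd p < s} \<le> card S" and "2 * card {p \<in> S. s < snd p} \<le> card S"
    and row: "real (card {p \<in> S. fst p = r}) < t" and column: "real (card {p \<in> S. snd p = s}) < t"
    and off_diagonal: "{p \<in> S. fst p < r \<and> s < snd p} \<noteq> {} \<Longrightarrow> {p \<in> S. r < fst p \<and> snd p < s} \<noteq> {} \<Longrightarrow>
      real (card {p \<in> S. fst p < r \<and> s < snd p}) < t \<and> real (card {p \<in> S. r < fst p \<and> snd p < s}) < t"
  shows "real (card S) - 4 * t
    \<le> real (card {p \<in> S. fst p < r \<and> snd p < s}) + real (card {p \<in> S. r < fst p \<and> s < snd p})"
proof -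
  define A where "A = {p \<in> S. fst p < r \<and> snd p < s}"
  define B where "B = {p \<in> S. r < fst p \<and> s < snd p}"
  define D where "D = {p \<in> S. fst p < r \<and> s < snd p}"
  define F where "F = {p \<in> S. r < fst p \<and> snd p < s}"
  define RC where "RC = card {p \<in> S. fst p = r} + card {p \<in> S. snd p = s}"
  have AD: "card A + card D \<le> card {p \<in> S. fst p < r}"
    by (rule card_disjoint_add_le) (auto simp: A_def D_def assms(1))
  have AF: "card A + card F \<le> card {p \<in> S. snd p < s}"
    by (rule card_disjoint_add_le) (auto simp: A_def F_def assms(1))
  have BF: "card B + card F \<le> card {p \<in> S. r < fst p}"
    by (rule card_disjoint_add_le) (auto simp: B_def F_def assms(1))
  have BD: "card B + card D \<le> card {p \<in> S. s < snd p}"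
    by (rule card_disjoint_add_le) (auto simp: B_def D_def assms(1))
  have cover: "card S \<le> card A + card B + card D + card F + RC"
    using card_le_quadrants[OF assms(1), of r s] unfolding A_def B_def D_def F_def RC_def by linarith
  have "real (card S) - 4 * t \<le> real (card A) + real (card B)"
  proof (cases "D = {} \<or> F = {}")
    case True
    \<comment> \<open>The median bounds then make the nonempty off-diagonal quadrant no larger than the median row
        and column together.\<close>
    then have "card D = 0 \<or> card F = 0" by auto
    then have "card S \<le> card A + card B + 2 * RC"
      using AD AF BF BD cover assms(2-5) by (elim disjE) linarith+
    then have "real (card S) \<le> real (card A + card B + 2 * RC)" by (rule of_nat_mono)
    then show ?thesis using row column by (simp add: RC_def)
  next
    case False
    have "real (card S) \<le> real (card A + card B + card D + card F + RC)"
      using cover by (rule of_nat_mono)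
    then show ?thesis using False off_diagonal row column by (simp add: RC_def D_def F_def)
  qed
  then show ?thesis by (simp add: A_def B_def)
qed

lemma split_rectangle:
  assumes fin: "finite P" and L: "L > 0" and nonempty: "rect_points P (a, b, c, d) \<noteq> {}"
    and no_line: "\<not> heavy_line P L (a, b, c, d)"
    and no_crossing: "\<not> heavy_crossing P L (a, b, c, d)"
  obtains r s where "a \<le> r" "r < b" "c \<le> s" "s < d"
    and "2 * card (rect_points P (a, r, c, s)) \<le> card (rect_points P (a, b, c, d))"
    and "2 * card (rect_points P (Suc r, b, Suc s, d)) \<le> card (rect_points P (a, b, c, d))"
    and "real (card (rect_points P (a, b, c, d))) - 4 * real (card (rect_points P (a, b, c, d))) / L
       \<le> real (card (rect_points P (a, r, c, s))) + real (card (rect_points P (Suc r, b, Suc s, d)))"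
proof -
  define S where "S = rect_points P (a, b, c, d)"
  have finS: "finite S" using fin by (simp add: S_def)
  have range: "\<forall>p \<in> S. a \<le> fst p \<and> fst p < b" "\<forall>p \<in> S. c \<le> snd p \<and> snd p < d"
    by (simp_all add: S_def)
  obtain r where r: "a \<le> r" "r < b" "2 * card {p \<in> S. fst p < r} \<le> card S" "2 * card {p \<in> S. r < fst p} \<le> card S"
    using exists_median_between[OF finS nonempty[folded S_def] range(1)] by blast
  obtain s where s: "c \<le> s" "s < d" "2 * card {p \<in> S. snd p < s} \<le> card S" "2 * card {p \<in> S. s < snd p} \<le> card S"
    using exists_median_between[OF finS nonempty[folded S_def] range(2)] by blast
  have A: "rect_points P (a, r, c, s) = {p \<in> S. fst p < r \<and> snd p < s}" using r s by (auto simp: S_def)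
  have B: "rect_points P (Suc r, b, Suc s, d) = {p \<in> S. r < fst p \<and> s < snd p}" using r s by (auto simp: S_def)
  have "card {p \<in> S. fst p < r \<and> snd p < s} \<le> card {p \<in> S. fst p < r}"
    and "card {p \<in> S. r < fst p \<and> s < snd p} \<le> card {p \<in> S. r < fst p}"
    using finS by (auto intro: card_mono)
  then have "2 * card {p \<in> S. fst p < r \<and> snd p < s} \<le> card S"
    and "2 * card {p \<in> S. r < fst p \<and> s < snd p} \<le> card S"
    using r(3,4) by linarith+
  moreover have "real (card S) - 4 * (real (card S) / L)
      \<le> real (card {p \<in> S. fst p < r \<and> snd p < s}) + real (card {p \<in> S. r < fst p \<and> s < snd p})"
  proof (rule diagonal_quadrants_bound[OF finS r(3,4) s(3,4)])
    show "real (card {p \<in> S. fst p = r}) < real (card S) / L"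
      and "real (card {p \<in> S. snd p = s}) < real (card S) / L"
      using not_heavy_line_card_less[OF fin L nonempty no_line] by (simp_all add: S_def)
    assume "{p \<in> S. fst p < r \<and> s < snd p} \<noteq> {}" and "{p \<in> S. r < fst p \<and> snd p < s} \<noteq> {}"
    then obtain p q where p: "p \<in> S" "fst p < r" "s < snd p" and q: "q \<in> S" "r < fst q" "snd q < s"
      by blast
    \<comment> \<open>each point of one off-diagonal quadrant crosses every point of the other\<close>
    have "real (card {p \<in> S. r < fst p \<and> snd p < s}) < real (card S) / L"
      using p by (intro not_heavy_crossing_card_less[OF fin no_crossing, folded S_def]) (auto simp: crossing_def)
    moreover have "real (card {p \<in> S. fst p < r \<and> s < snd p}) < real (card S) / L"
      using q by (intro not_heavy_crossing_card_less[OF fin no_crossing, folded S_def]) (auto simp: crossing_def)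
    ultimately show "real (card {p \<in> S. fst p < r \<and> s < snd p}) < real (card S) / L \<and>
        real (card {p \<in> S. r < fst p \<and> snd p < s}) < real (card S) / L" by blast
  qed
  ultimately show thesis
    using that[OF r(1,2) s(1,2)] unfolding A B S_def by simp
qed

definition chain_bound :: "real \<Rightarrow> nat \<Rightarrow> real" where
  "chain_bound L e = real e - 5 * real e * log 2 (real e) / L"

lemma chain_bound_split:
  assumes L: "L \<ge> 20" and log_e: "5 * log 2 (real e) \<le> L"
    and e1: "2 * e1 \<le> e" and e2: "2 * e2 \<le> e"
    and loss: "real e - 4 * real e / L \<le> real e1 + real e2"
  shows "chain_bound L e \<le> chain_bound L e1 + chain_bound L e2"
proof (cases "e = 0")
  case True
  then show ?thesis using e1 e2 by (simp add: chain_bound_def)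
next
  case False
  define l where "l = log 2 (real e)"
  define \<kappa> where "\<kappa> = 1 - 5 * (l - 1) / L"
  have "L > 0" using L by simp
  have l0: "l \<ge> 0" using False by (simp add: l_def)
  have \<kappa>0: "\<kappa> \<ge> 0" using log_e \<open>L > 0\<close> by (simp add: \<kappa>_def l_def field_simps)
  have half: "real k * \<kappa> \<le> chain_bound L k" if "2 * k \<le> e" for k
  proof (cases "k = 0")
    case False
    have "log 2 (real k) \<le> log 2 (real e / 2)"
      using False that by (subst log_le_cancel_iff) auto
    also have "\<dots> = l - 1" using \<open>e \<noteq> 0\<close> by (simp add: l_def log_divide)
    finally have "5 * real k * log 2 (real k) / L \<le> 5 * real k * (l - 1) / L"
      using \<open>L > 0\<close> by (intro divide_right_mono) (auto intro: mult_left_mono)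
    then show ?thesis by (simp add: chain_bound_def \<kappa>_def algebra_simps)
  qed (simp add: chain_bound_def)
  have "(real e - 4 * real e / L) * \<kappa> - chain_bound L e = real e * (L + 20 * l - 20) / L\<^sup>2"
    using \<open>L > 0\<close> by (simp add: chain_bound_def \<kappa>_def l_def field_simps power2_eq_square)
  also have "\<dots> \<ge> 0" using L l0 by simp
  finally have "chain_bound L e \<le> (real e - 4 * real e / L) * \<kappa>" by simp
  also have "\<dots> \<le> (real e1 + real e2) * \<kappa>" using loss \<kappa>0 by (rule mult_right_mono)
  also have "\<dots> \<le> chain_bound L e1 + chain_bound L e2"
    using half[OF e1] half[OF e2] by (simp add: distrib_right)
  finally show ?thesis .
qed

lemma log_of_nat_mono: "k \<le> n \<Longrightarrow> log 2 (real k) \<le> log 2 (real n)"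
  by (cases "k = 0"; cases "n = 0") (auto simp: log_def divide_right_mono)

lemma good_chain_of_split:
  assumes "a \<le> r" and "r < b" and "c \<le> s" and "s < d"
    and lower: "good_chain P L (a, r, c, s) C1" and upper: "good_chain P L (Suc r, b, Suc s, d) C2"
  shows "good_chain P L (a, b, c, d) (C2 @ C1)"
proof -
  have "rect_after x y" if "subrect x (Suc r, b, Suc s, d)" and "subrect y (a, r, c, s)" for x y
    using that by (cases x, cases y) auto
  then have "sorted_wrt rect_after (C2 @ C1)"
    using lower upper unfolding good_chain_def sorted_wrt_append by simp
  moreover have "subrect x (a, b, c, d)" if "subrect x (a, r, c, s) \<or> subrect x (Suc r, b, Suc s, d)" for x
    using that assms(1-4) by (cases x) auto
  ultimately show ?thesis using lower upper unfolding good_chain_def by (auto simp del: subrect.simps)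
qed

lemma exists_good_chain:
  assumes fin: "finite P" and L: "L \<ge> 20"
  shows "5 * log 2 (real (card (rect_points P (a, b, c, d)))) \<le> L \<Longrightarrow> \<exists>C. good_chain P L (a, b, c, d) C \<and>
    chain_bound L (card (rect_points P (a, b, c, d))) \<le> (\<Sum>x\<leftarrow>C. real (card (rect_points P x)))"
proof (induction "card (rect_points P (a, b, c, d))" arbitrary: a b c d rule: less_induct)
  case less
  define e where "e = card (rect_points P (a, b, c, d))"
  have e_pos: "e > 0" if "rect_points P (a, b, c, d) \<noteq> {}"
    using that fin finite_subset[OF rect_points_subset] by (simp add: e_def card_gt_0_iff)
  consider (empty) "rect_points P (a, b, c, d) = {}"
    | (heavy) "rect_points P (a, b, c, d) \<noteq> {}" "heavy_line P L (a, b, c, d) \<or> heavy_crossing P L (a, b, c, d)"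
    | (light) "rect_points P (a, b, c, d) \<noteq> {}" "\<not> heavy_line P L (a, b, c, d)" "\<not> heavy_crossing P L (a, b, c, d)"
    by blast
  then show ?case
  proof cases
    case empty
    show ?thesis unfolding empty by (intro exI[of _ "[]"]) (simp add: good_chain_def chain_bound_def)
  next
    case heavy
    then have "subrect (a, b, c, d) (a, b, c, d)" by auto
    moreover have "chain_bound L e \<le> real e" using e_pos[OF heavy(1)] L by (simp add: chain_bound_def)
    ultimately show ?thesis using heavy by (intro exI[of _ "[(a, b, c, d)]"]) (simp add: good_chain_def e_def)
  next
    case light
    have "L > 0" using L by simp
    obtain r s where rs: "a \<le> r" "r < b" "c \<le> s" "s < d"
      and e1: "2 * card (rect_points P (a, r, c, s)) \<le> e"
      and e2: "2 * card (rect_points P (Suc r, b, Suc s, d)) \<le> e"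
      and loss: "real e - 4 * real e / L
        \<le> real (card (rect_points P (a, r, c, s))) + real (card (rect_points P (Suc r, b, Suc s, d)))"
      unfolding e_def by (rule split_rectangle[OF fin \<open>L > 0\<close> light])
    have log_e: "5 * log 2 (real e) \<le> L" using less.prems by (simp add: e_def)
    have IH: "\<exists>C. good_chain P L (a', b', c', d') C \<and> chain_bound L (card (rect_points P (a', b', c', d')))
        \<le> (\<Sum>x\<leftarrow>C. real (card (rect_points P x)))"
      if "2 * card (rect_points P (a', b', c', d')) \<le> e" for a' b' c' d'
    proof (rule less.hyps)
      show "card (rect_points P (a', b', c', d')) < card (rect_points P (a, b, c, d))"
        using that e_pos[OF light(1)] by (simp add: e_def)
      show "5 * log 2 (real (card (rect_points P (a', b', c', d')))) \<le> L"
        using log_of_nat_mono[of "card (rect_points P (a', b', c', d'))" e] that log_e by linarith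
    qed
    obtain C1 where C1: "good_chain P L (a, r, c, s) C1"
      "chain_bound L (card (rect_points P (a, r, c, s))) \<le> (\<Sum>x\<leftarrow>C1. real (card (rect_points P x)))"
      using IH[OF e1] by blast
    obtain C2 where C2: "good_chain P L (Suc r, b, Suc s, d) C2"
      "chain_bound L (card (rect_points P (Suc r, b, Suc s, d))) \<le> (\<Sum>x\<leftarrow>C2. real (card (rect_points P x)))"
      using IH[OF e2] by blast
    have "chain_bound L e \<le> (\<Sum>x\<leftarrow>C2 @ C1. real (card (rect_points P x)))"
      using chain_bound_split[OF L log_e e1 e2] loss C1(2) C2(2) by simp
    then show ?thesis using good_chain_of_split[OF rs C1(1) C2(1)] unfolding e_def by blast
  qed
qed

lemma sum_list_filter_partition:
  "(\<Sum>x\<leftarrow>xs. w x) = (\<Sum>x\<leftarrow>filter Q xs. w x) + (\<Sum>x\<leftarrow>filter (\<lambda>x. \<not> Q x) xs. (w x :: 'b :: comm_monoid_add))"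
  by (induction xs) (simp_all add: ac_simps)

lemma good_chain_select:
  assumes "good_chain P L R C"
  obtains C' where "set C' \<subseteq> set C" and "sorted_wrt rect_after C'"
    and "(\<Sum>x\<leftarrow>C. real (card (rect_points P x))) \<le> 2 * (\<Sum>x\<leftarrow>C'. real (card (rect_points P x)))"
    and "(\<forall>x \<in> set C'. heavy_line P L x) \<or> (\<forall>x \<in> set C'. heavy_crossing P L x)"
proof -
  let ?w = "\<lambda>x. real (card (rect_points P x))"
  let ?C1 = "filter (heavy_line P L) C" and ?C2 = "filter (\<lambda>x. \<not> heavy_line P L x) C"
  have sorted: "sorted_wrt rect_after ?C1" "sorted_wrt rect_after ?C2"
    using assms by (simp_all add: good_chain_def sorted_wrt_filter)
  have "(\<Sum>x\<leftarrow>C. ?w x) = (\<Sum>x\<leftarrow>?C1. ?w x) + (\<Sum>x\<leftarrow>?C2. ?w x)"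
    by (rule sum_list_filter_partition)
  then consider "(\<Sum>x\<leftarrow>C. ?w x) \<le> 2 * (\<Sum>x\<leftarrow>?C1. ?w x)" | "(\<Sum>x\<leftarrow>C. ?w x) \<le> 2 * (\<Sum>x\<leftarrow>?C2. ?w x)"
    by linarith
  then show thesis
  proof cases
    case 1
    then show thesis using sorted(1) by (intro that[of ?C1]) auto
  next
    case 2
    moreover have "\<forall>x \<in> set ?C2. heavy_crossing P L x" using assms by (auto simp: good_chain_def)
    ultimately show thesis using sorted(2) by (intro that[of ?C2]) auto
  qed
qed

section \<open>From rectangles to subsection pairs\<close>

definition segment :: "'a list \<Rightarrow> nat \<Rightarrow> nat \<Rightarrow> 'a list" where
  "segment Z a b = take (b - a) (drop a Z)"

lemma set_segment:
  assumes "b \<le> length Z"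
  shows "set (segment Z a b) = (\<lambda>k. Z ! k) ` {a..<b}"
proof -
  have "set (segment Z a b) = (\<lambda>t. segment Z a b ! t) ` {..<length (segment Z a b)}"
    by (auto simp: set_conv_nth)
  also have "\<dots> = (\<lambda>k. Z ! k) ` {a..<b}"
  proof (intro equalityI subsetI)
    fix z assume "z \<in> (\<lambda>t. segment Z a b ! t) ` {..<length (segment Z a b)}"
    then obtain t where "t < length (segment Z a b)" "z = segment Z a b ! t" by blast
    then show "z \<in> (\<lambda>k. Z ! k) ` {a..<b}"
      using assms by (intro image_eqI[of _ _ "a + t"]) (auto simp: segment_def)
  next
    fix z assume "z \<in> (\<lambda>k. Z ! k) ` {a..<b}"
    then obtain k where "a \<le> k" "k < b" "z = Z ! k" by auto
    then show "z \<in> (\<lambda>t. segment Z a b ! t) ` {..<length (segment Z a b)}"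
      using assms by (intro image_eqI[of _ _ "k - a"]) (auto simp: segment_def)
  qed
  finally show ?thesis .
qed

lemma segment_subpath:
  assumes "a < b" and "b \<le> length Z"
  shows "subpath (segment Z a b) Z"
proof -
  have "drop a Z = segment Z a b @ drop b Z"
    using assms(1) unfolding segment_def by (metis append_take_drop_id drop_drop le_add_diff_inverse2 less_imp_le)
  then have "Z = take a Z @ segment Z a b @ drop b Z" by (metis append_take_drop_id)
  moreover have "segment Z a b \<noteq> []" using assms by (simp add: segment_def)
  ultimately show ?thesis unfolding subpath_def by blast
qed

lemma above_nth_iff:
  assumes "distinct Z" and "i < length Z" and "j < length Z"
  shows "above Z (Z ! i) (Z ! j) \<longleftrightarrow> i < j"
  using assms unfolding above_def by (metis (no_types, lifting) less_trans nth_eq_iff_index_eq)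

lemma not_above_self: "distinct Z \<Longrightarrow> \<not> above Z v v"
  unfolding above_def by (metis nth_eq_iff_index_eq order_less_irrefl order.strict_trans)

definition index_chords :: "('a \<Rightarrow> 'a \<Rightarrow> bool) \<Rightarrow> 'a list \<Rightarrow> 'a list \<Rightarrow> (nat \<times> nat) set" where
  "index_chords E X Y = {(i, j). i < length X \<and> j < length Y \<and> E (X ! i) (Y ! j)}"

definition chord_at :: "'a list \<Rightarrow> 'a list \<Rightarrow> nat \<times> nat \<Rightarrow> 'a \<times> 'a" where
  "chord_at X Y p = (X ! fst p, Y ! snd p)"

fun subsection_pair :: "'a list \<Rightarrow> 'a list \<Rightarrow> nat \<times> nat \<times> nat \<times> nat \<Rightarrow> 'a list \<times> 'a list" where
  "subsection_pair X Y (a, b, c, d) = (segment X a b, segment Y c d)"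

lemma finite_index_chords: "finite (index_chords E X Y)"
proof -
  have "index_chords E X Y \<subseteq> {..<length X} \<times> {..<length Y}" by (auto simp: index_chords_def)
  then show ?thesis by (rule finite_subset) auto
qed

lemma inj_on_chord_at:
  assumes "distinct X" and "distinct Y" and "Q \<subseteq> index_chords E X Y"
  shows "inj_on (chord_at X Y) Q"
proof (rule inj_on_subset[OF _ assms(3)])
  show "inj_on (chord_at X Y) (index_chords E X Y)"
    using assms(1,2) by (auto simp: inj_on_def chord_at_def index_chords_def nth_eq_iff_index_eq)
qed

lemma chords_subsection:
  assumes "subrect R (0, length X, 0, length Y)"
  shows "chords E (fst (subsection_pair X Y R)) (snd (subsection_pair X Y R))
    = chord_at X Y ` rect_points (index_chords E X Y) R"
proof -
  obtain a b c d where R: "R = (a, b, c, d)" by (cases R)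
  have "b \<le> length X" "d \<le> length Y" using assms by (simp_all add: R)
  then show ?thesis
    by (simp add: R chords_def set_segment) (force simp: chord_at_def index_chords_def)
qed

lemma card_chords_subsection:
  assumes "distinct X" and "distinct Y" and "subrect R (0, length X, 0, length Y)"
  shows "card (chords E (fst (subsection_pair X Y R)) (snd (subsection_pair X Y R)))
    = card (rect_points (index_chords E X Y) R)"
  unfolding chords_subsection[OF assms(3)]
  by (rule card_image) (rule inj_on_chord_at[OF assms(1,2) rect_points_subset])

lemma chords_incident_row:
  assumes "distinct X" and disj: "set X \<inter> set Y = {}" and Q: "Q \<subseteq> index_chords E X Y"
    and k: "k < length X"
  shows "{c \<in> chord_at X Y ` Q. fst c = X ! k \<or> snd c = X ! k} = chord_at X Y ` {q \<in> Q. fst q = k}"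
proof (intro equalityI subsetI)
  fix c assume "c \<in> {c \<in> chord_at X Y ` Q. fst c = X ! k \<or> snd c = X ! k}"
  then obtain q where q: "q \<in> Q" "c = chord_at X Y q"
    and incident: "X ! fst q = X ! k \<or> Y ! snd q = X ! k" by (auto simp: chord_at_def)
  have "fst q < length X" "snd q < length Y" using q(1) Q by (auto simp: index_chords_def)
  then have "Y ! snd q \<noteq> X ! k" using disj k by (metis disjoint_iff nth_mem)
  then have "fst q = k" using incident assms(1) k \<open>fst q < length X\<close> by (auto simp: nth_eq_iff_index_eq)
  then show "c \<in> chord_at X Y ` {q \<in> Q. fst q = k}" using q by auto
qed (auto simp: chord_at_def)

lemma chords_incident_column:
  assumes "distinct Y" and disj: "set X \<inter> set Y = {}" and Q: "Q \<subseteq> index_chords E X Y"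
    and k: "k < length Y"
  shows "{c \<in> chord_at X Y ` Q. fst c = Y ! k \<or> snd c = Y ! k} = chord_at X Y ` {q \<in> Q. snd q = k}"
proof (intro equalityI subsetI)
  fix c assume "c \<in> {c \<in> chord_at X Y ` Q. fst c = Y ! k \<or> snd c = Y ! k}"
  then obtain q where q: "q \<in> Q" "c = chord_at X Y q"
    and incident: "X ! fst q = Y ! k \<or> Y ! snd q = Y ! k" by (auto simp: chord_at_def)
  have "fst q < length X" "snd q < length Y" using q(1) Q by (auto simp: index_chords_def)
  then have "X ! fst q \<noteq> Y ! k" using disj k by (metis disjoint_iff nth_mem)
  then have "snd q = k" using incident assms(1) k \<open>snd q < length Y\<close> by (auto simp: nth_eq_iff_index_eq)
  then show "c \<in> chord_at X Y ` {q \<in> Q. snd q = k}" using q by auto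
qed (auto simp: chord_at_def)

lemma interlacing_chord_at:
  assumes "distinct X" and "distinct Y" and "p \<in> index_chords E X Y" and "q \<in> index_chords E X Y"
  shows "interlacing X Y (chord_at X Y p) (chord_at X Y q) \<longleftrightarrow> crossing p q"
  using assms
  unfolding interlacing_def parallel_chords_def crossing_def chord_at_def index_chords_def
  by (auto simp: above_nth_iff nth_eq_iff_index_eq)

lemma segment_below:
  assumes "distinct Z" and "b \<le> length Z" and "b' \<le> length Z" and "b' \<le> a"
  shows "set_below Z (set (segment Z a b)) (set (segment Z a' b'))"
  using assms unfolding set_below_def set_segment[OF assms(2)] set_segment[OF assms(3)]
  by (auto simp: above_nth_iff)

lemma set_below_disjoint:
  assumes "distinct Z" and "set_below Z A B"
  shows "A \<inter> B = {}"
  using assms(2) not_above_self[OF assms(1)] unfolding set_below_def by blast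

lemma parallel_collection_subsection_pairs:
  assumes "distinct X" and "distinct Y"
    and subrects: "\<forall>R \<in> set Cs. subrect R (0, length X, 0, length Y)"
    and sorted: "sorted_wrt rect_after Cs"
  shows "parallel_collection X Y (map (subsection_pair X Y) Cs)"
proof -
  let ?C = "map (subsection_pair X Y) Cs"
  have subpaths: "subpath (fst (?C ! i)) X \<and> subpath (snd (?C ! i)) Y" if "i < length ?C" for i
  proof -
    obtain a b c d where Ci: "Cs ! i = (a, b, c, d)" by (cases "Cs ! i")
    have "subrect (a, b, c, d) (0, length X, 0, length Y)" using subrects that Ci by (metis length_map nth_mem)
    then show ?thesis using that Ci by (simp add: segment_subpath)
  qed
  have separated: "set (fst (?C ! i)) \<inter> set (fst (?C ! j)) = {} \<and> set (snd (?C ! i)) \<inter> set (snd (?C ! j)) = {} \<and>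
      set_below X (set (fst (?C ! i))) (set (fst (?C ! j))) \<and> set_below Y (set (snd (?C ! i))) (set (snd (?C ! j)))"
    if ij: "i < j" "j < length ?C" for i j
  proof -
    obtain a b c d where Ci: "Cs ! i = (a, b, c, d)" by (cases "Cs ! i")
    obtain a' b' c' d' where Cj: "Cs ! j = (a', b', c', d')" by (cases "Cs ! j")
    have "subrect (a, b, c, d) (0, length X, 0, length Y)"
      using subrects ij Ci by (metis length_map nth_mem order.strict_trans)
    moreover have "subrect (a', b', c', d') (0, length X, 0, length Y)"
      using subrects ij Cj by (metis length_map nth_mem)
    moreover have "rect_after (Cs ! i) (Cs ! j)" using sorted ij by (simp add: sorted_wrt_iff_nth_less)
    ultimately have "set_below X (set (segment X a b)) (set (segment X a' b'))"
      and "set_below Y (set (segment Y c d)) (set (segment Y c' d'))"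
      using assms(1,2) Ci Cj by (simp_all add: segment_below)
    then show ?thesis
      using ij Ci Cj set_below_disjoint[OF assms(1)] set_below_disjoint[OF assms(2)] by simp
  qed
  show ?thesis unfolding parallel_collection_def using subpaths separated by blast
qed

definition collection_weight :: "('a \<Rightarrow> 'a \<Rightarrow> bool) \<Rightarrow> ('a list \<times> 'a list) list \<Rightarrow> real" where
  "collection_weight E C = (\<Sum>i<length C. real (card (chords E (fst (C ! i)) (snd (C ! i)))))"

definition heavy_vertex :: "('a \<Rightarrow> 'a \<Rightarrow> bool) \<Rightarrow> real \<Rightarrow> 'a list \<times> 'a list \<Rightarrow> bool" where
  "heavy_vertex E L S \<longleftrightarrow> (\<exists>v \<in> set (fst S) \<union> set (snd S).
     real (card {c \<in> chords E (fst S) (snd S). fst c = v \<or> snd c = v})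
       \<ge> real (card (chords E (fst S) (snd S))) / L)"

definition heavy_interlacing :: "('a \<Rightarrow> 'a \<Rightarrow> bool) \<Rightarrow> 'a list \<Rightarrow> 'a list \<Rightarrow> real \<Rightarrow> 'a list \<times> 'a list \<Rightarrow> bool" where
  "heavy_interlacing E X Y L S \<longleftrightarrow> (\<exists>c \<in> chords E (fst S) (snd S).
     real (card {d \<in> chords E (fst S) (snd S). interlacing X Y c d})
       \<ge> real (card (chords E (fst S) (snd S))) / L)"

definition good_collection ::
    "('a \<Rightarrow> 'a \<Rightarrow> bool) \<Rightarrow> 'a list \<Rightarrow> 'a list \<Rightarrow> real \<Rightarrow> real \<Rightarrow> ('a list \<times> 'a list) list \<Rightarrow> bool" where
  "good_collection E X Y w L C \<longleftrightarrow> parallel_collection X Y C \<and> w \<le> collection_weight E C \<and>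
     ((\<forall>i < length C. heavy_vertex E L (C ! i)) \<or> (\<forall>i < length C. heavy_interlacing E X Y L (C ! i)))"

lemma good_collection_mono: "w \<le> w' \<Longrightarrow> good_collection E X Y w' L C \<Longrightarrow> good_collection E X Y w L C"
  unfolding good_collection_def by auto

lemma heavy_vertex_subsection_pair:
  assumes dX: "distinct X" and dY: "distinct Y" and disj: "set X \<inter> set Y = {}"
    and R: "subrect R (0, length X, 0, length Y)" and heavy: "heavy_line (index_chords E X Y) L R"
  shows "heavy_vertex E L (subsection_pair X Y R)"
proof -
  obtain a b c d where R_def: "R = (a, b, c, d)" by (cases R)
  define Q where "Q = rect_points (index_chords E X Y) R"
  have Q: "Q \<subseteq> index_chords E X Y" by (simp add: Q_def rect_points_subset)
  have chords_Q: "chords E (fst (subsection_pair X Y R)) (snd (subsection_pair X Y R)) = chord_at X Y ` Q"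
    unfolding Q_def by (rule chords_subsection[OF R])
  have card_image_Q: "card (chord_at X Y ` Q') = card Q'" if "Q' \<subseteq> Q" for Q'
    using that Q by (intro card_image inj_on_chord_at[OF dX dY]) auto
  from heavy obtain p where p: "p \<in> Q"
    and p_heavy: "real (card {q \<in> Q. fst q = fst p}) \<ge> real (card Q) / L \<or>
      real (card {q \<in> Q. snd q = snd p}) \<ge> real (card Q) / L"
    unfolding heavy_line_def Q_def by blast
  have "b \<le> length X" "d \<le> length Y" using R by (simp_all add: R_def)
  moreover have "a \<le> fst p" "fst p < b" "c \<le> snd p" "snd p < d"
    using p by (simp_all add: Q_def R_def)
  ultimately have X_p: "X ! fst p \<in> set (fst (subsection_pair X Y R))" "fst p < length X"
    and Y_p: "Y ! snd p \<in> set (snd (subsection_pair X Y R))" "snd p < length Y"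
    by (simp_all add: R_def set_segment)
  from p_heavy show ?thesis
  proof
    assume row: "real (card {q \<in> Q. fst q = fst p}) \<ge> real (card Q) / L"
    show ?thesis
      unfolding heavy_vertex_def chords_Q
    proof (rule bexI[of _ "X ! fst p"])
      show "real (card {c \<in> chord_at X Y ` Q. fst c = X ! fst p \<or> snd c = X ! fst p})
          \<ge> real (card (chord_at X Y ` Q)) / L"
        unfolding chords_incident_row[OF dX disj Q X_p(2)]
        using row card_image_Q[of Q] card_image_Q[of "{q \<in> Q. fst q = fst p}"] by simp
    qed (use X_p(1) in simp)
  next
    assume column: "real (card {q \<in> Q. snd q = snd p}) \<ge> real (card Q) / L"
    show ?thesis
      unfolding heavy_vertex_def chords_Q
    proof (rule bexI[of _ "Y ! snd p"])
      show "real (card {c \<in> chord_at X Y ` Q. fst c = Y ! snd p \<or> snd c = Y ! snd p})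
          \<ge> real (card (chord_at X Y ` Q)) / L"
        unfolding chords_incident_column[OF dY disj Q Y_p(2)]
        using column card_image_Q[of Q] card_image_Q[of "{q \<in> Q. snd q = snd p}"] by simp
    qed (use Y_p(1) in simp)
  qed
qed

lemma heavy_interlacing_subsection_pair:
  assumes dX: "distinct X" and dY: "distinct Y"
    and R: "subrect R (0, length X, 0, length Y)" and heavy: "heavy_crossing (index_chords E X Y) L R"
  shows "heavy_interlacing E X Y L (subsection_pair X Y R)"
proof -
  define Q where "Q = rect_points (index_chords E X Y) R"
  have Q: "Q \<subseteq> index_chords E X Y" by (simp add: Q_def rect_points_subset)
  have chords_Q: "chords E (fst (subsection_pair X Y R)) (snd (subsection_pair X Y R)) = chord_at X Y ` Q"
    unfolding Q_def by (rule chords_subsection[OF R])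
  have card_image_Q: "card (chord_at X Y ` Q') = card Q'" if "Q' \<subseteq> Q" for Q'
    using that Q by (intro card_image inj_on_chord_at[OF dX dY]) auto
  from heavy obtain p where p: "p \<in> Q" and p_heavy: "real (card {q \<in> Q. crossing p q}) \<ge> real (card Q) / L"
    unfolding heavy_crossing_def Q_def by blast
  have "interlacing X Y (chord_at X Y p) (chord_at X Y q) \<longleftrightarrow> crossing p q" if "q \<in> Q" for q
    using interlacing_chord_at[OF dX dY] p Q that by blast
  then have "{d \<in> chord_at X Y ` Q. interlacing X Y (chord_at X Y p) d} = chord_at X Y ` {q \<in> Q. crossing p q}"
    by auto
  then show ?thesis
    unfolding heavy_interlacing_def chords_Q
    using p p_heavy card_image_Q[of Q] card_image_Q[of "{q \<in> Q. crossing p q}"]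
    by (intro bexI[of _ "chord_at X Y p"]) simp_all
qed

lemma collection_weight_subsection_pairs:
  assumes "distinct X" and "distinct Y" and "\<forall>R \<in> set Cs. subrect R (0, length X, 0, length Y)"
  shows "collection_weight E (map (subsection_pair X Y) Cs)
    = (\<Sum>R\<leftarrow>Cs. real (card (rect_points (index_chords E X Y) R)))"
proof -
  have "collection_weight E (map (subsection_pair X Y) Cs)
      = (\<Sum>i<length Cs. real (card (rect_points (index_chords E X Y) (Cs ! i))))"
    unfolding collection_weight_def using assms by (intro sum.cong) (simp_all add: card_chords_subsection)
  also have "\<dots> = (\<Sum>R\<leftarrow>Cs. real (card (rect_points (index_chords E X Y) R)))"
    by (simp add: sum_list_sum_nth atLeast0LessThan)
  finally show ?thesis .
qed

lemma good_collection_from_good_chain: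
  assumes dX: "distinct X" and dY: "distinct Y" and disj: "set X \<inter> set Y = {}"
    and chain: "good_chain (index_chords E X Y) L (0, length X, 0, length Y) C"
  shows "\<exists>C'. good_collection E X Y ((\<Sum>R\<leftarrow>C. real (card (rect_points (index_chords E X Y) R))) / 2) L C'"
proof -
  obtain Cs where "set Cs \<subseteq> set C" and sorted: "sorted_wrt rect_after Cs"
    and weight: "(\<Sum>R\<leftarrow>C. real (card (rect_points (index_chords E X Y) R)))
      \<le> 2 * (\<Sum>R\<leftarrow>Cs. real (card (rect_points (index_chords E X Y) R)))"
    and heavy: "(\<forall>R \<in> set Cs. heavy_line (index_chords E X Y) L R) \<or>
      (\<forall>R \<in> set Cs. heavy_crossing (index_chords E X Y) L R)"
    using good_chain_select[OF chain] by blast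
  then have subrects: "\<forall>R \<in> set Cs. subrect R (0, length X, 0, length Y)"
    using chain by (auto simp: good_chain_def)
  have "(\<forall>R \<in> set Cs. heavy_vertex E L (subsection_pair X Y R)) \<or>
      (\<forall>R \<in> set Cs. heavy_interlacing E X Y L (subsection_pair X Y R))"
    using heavy subrects heavy_vertex_subsection_pair[OF dX dY disj] heavy_interlacing_subsection_pair[OF dX dY]
    by blast
  then have "(\<forall>i < length Cs. heavy_vertex E L (map (subsection_pair X Y) Cs ! i)) \<or>
      (\<forall>i < length Cs. heavy_interlacing E X Y L (map (subsection_pair X Y) Cs ! i))"
    by (auto simp: all_set_conv_all_nth)
  then have "good_collection E X Y ((\<Sum>R\<leftarrow>C. real (card (rect_points (index_chords E X Y) R))) / 2) L
      (map (subsection_pair X Y) Cs)"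
    unfolding good_collection_def
    using parallel_collection_subsection_pairs[OF dX dY subrects sorted]
      weight collection_weight_subsection_pairs[OF dX dY subrects] by simp
  then show ?thesis ..
qed

lemma good_collection_single_chord:
  assumes "(x, y) \<in> chords E X Y" and "1 \<le> L" and "w \<le> 1"
  shows "good_collection E X Y w L [([x], [y])]"
proof -
  have "x \<in> set X" "y \<in> set Y" and chord: "chords E [x] [y] = {(x, y)}"
    using assms(1) by (auto simp: chords_def)
  then have "subpath [x] X" "subpath [y] Y" by (auto simp: subpath_def dest: split_list)
  then have "parallel_collection X Y [([x], [y])]" by (simp add: parallel_collection_def)
  moreover have "collection_weight E [([x], [y])] = 1" by (simp add: collection_weight_def chord)
  moreover have "{c. c = (x, y) \<and> (fst c = x \<or> snd c = x)} = {(x, y)}" by auto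
  then have "heavy_vertex E L ([x], [y])" using assms(2) by (simp add: heavy_vertex_def chord)
  ultimately show ?thesis using assms(3) by (simp add: good_collection_def)
qed

lemma chords_eq_index_chords: "chords E X Y = chord_at X Y ` index_chords E X Y"
  by (force simp: chords_def chord_at_def index_chords_def in_set_conv_nth)

lemma rect_points_index_chords: "rect_points (index_chords E X Y) (0, length X, 0, length Y) = index_chords E X Y"
  by (auto simp: index_chords_def)

lemma good_collection_many_chords:
  assumes dX: "distinct X" and dY: "distinct Y" and disj: "set X \<inter> set Y = {}"
    and many: "16 \<le> card (chords E X Y)"
  shows "\<exists>C. good_collection E X Y (real (card (chords E X Y)) / 12) (6 * log 2 (real (card (chords E X Y)))) C"
proof -
  define m where "m = card (chords E X Y)"
  define L where "L = 6 * log 2 (real m)"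
  define P where "P = index_chords E X Y"
  have card_P: "card (rect_points P (0, length X, 0, length Y)) = m"
    unfolding m_def P_def rect_points_index_chords chords_eq_index_chords
    by (intro card_image[symmetric] inj_on_chord_at[OF dX dY subset_refl])
  have log_m: "4 \<le> log 2 (real m)" using many by (simp add: m_def le_log_iff)
  then have "20 \<le> L" and "5 * log 2 (real (card (rect_points P (0, length X, 0, length Y)))) \<le> L"
    unfolding card_P by (simp_all add: L_def)
  with exists_good_chain obtain C where chain: "good_chain P L (0, length X, 0, length Y) C"
    and "chain_bound L m \<le> (\<Sum>R\<leftarrow>C. real (card (rect_points P R)))"
    unfolding P_def card_P[symmetric] by (metis finite_index_chords)
  moreover have "chain_bound L m = real m / 6" using log_m by (simp add: chain_bound_def L_def)
  ultimately have "real m / 12 \<le> (\<Sum>R\<leftarrow>C. real (card (rect_points P R))) / 2" by simp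
  with good_collection_from_good_chain[OF dX dY disj chain[unfolded P_def]] good_collection_mono
  show ?thesis unfolding m_def L_def P_def by blast
qed

theorem lemma4p2:
  fixes E :: "'a \<Rightarrow> 'a \<Rightarrow> bool" and X Y :: "'a list"
  assumes "simple_graph E"
    and "section_pair E X Y"
    and "card (chords E X Y) \<ge> 2"
  shows "\<exists>C. parallel_collection X Y C \<and>
     (\<Sum>i<length C. real (card (chords E (fst (C ! i)) (snd (C ! i)))))
        \<ge> real (card (chords E X Y)) / 24 \<and>
     ((\<forall>i < length C. \<exists>v \<in> set (fst (C ! i)) \<union> set (snd (C ! i)).
         real (card {c \<in> chords E (fst (C ! i)) (snd (C ! i)). fst c = v \<or> snd c = v})
           \<ge> real (card (chords E (fst (C ! i)) (snd (C ! i))))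
              / (6 * log 2 (real (card (chords E X Y))))) \<or>
      (\<forall>i < length C. \<exists>c \<in> chords E (fst (C ! i)) (snd (C ! i)).
         real (card {d \<in> chords E (fst (C ! i)) (snd (C ! i)). interlacing X Y c d})
           \<ge> real (card (chords E (fst (C ! i)) (snd (C ! i))))
              / (6 * log 2 (real (card (chords E X Y))))))"
proof -
  have dX: "distinct X" and dY: "distinct Y" and disj: "set X \<inter> set Y = {}"
    using assms(2) by (auto simp: section_pair_def is_path_def)
  have "\<exists>C. good_collection E X Y (real (card (chords E X Y)) / 24) (6 * log 2 (real (card (chords E X Y)))) C"
  proof (cases "card (chords E X Y) \<le> 24")
    case True
    from assms(3) have "chords E X Y \<noteq> {}" by auto
    then obtain x y where "(x, y) \<in> chords E X Y" by auto
    moreover have "1 \<le> log 2 (real (card (chords E X Y)))" using assms(3) by simp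
    then have "1 \<le> 6 * log 2 (real (card (chords E X Y)))" by simp
    ultimately have "good_collection E X Y (real (card (chords E X Y)) / 24)
        (6 * log 2 (real (card (chords E X Y)))) [([x], [y])]"
      using True by (intro good_collection_single_chord) simp_all
    then show ?thesis ..
  next
    case False
    then obtain C where "good_collection E X Y (real (card (chords E X Y)) / 12)
        (6 * log 2 (real (card (chords E X Y)))) C"
      using good_collection_many_chords[OF dX dY disj] by force
    then have "good_collection E X Y (real (card (chords E X Y)) / 24)
        (6 * log 2 (real (card (chords E X Y)))) C"
      by (rule good_collection_mono[rotated]) simp
    then show ?thesis ..
  qed
  then show ?thesis
    unfolding good_collection_def collection_weight_def heavy_vertex_def heavy_interlacing_def .
qed

end
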